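(* Let $\mathcal A$ be a weakly amenable Banach algebra and $I$ a closed two-sided ideal of $\mathcal A$ which has a bounded approximate identity $(e_\alpha)_\alpha$ that is quasi-central, i.e. $\lim_\alpha(ae_\alpha-e_\alpha a)=0$ for every $a\in\mathcal A$. Then $\mathcal A$ is $I$-weakly amenable, i.e. $H^1(\mathcal A,I^* )=\{0\}$.
   Context: $I^*$ is a Banach $\mathcal A$-bimodule with $\langle x,a\cdot f\rangle=\langle xa,f\rangle$, $\langle x,f\cdot a\rangle=\langle ax,f\rangle$. A derivation $D:\mathcal A\to Z$ is a continuous linear map with $D(ab)=a\cdot D(b)+D(a)\cdot b$; it is inner if $D(a)=a\cdot z-z\cdot a$ for some $z\in Z$; $H^1(\mathcal A,Z)=\{0\}$ means every derivation is inner. $\mathcal A$ is weakly amenable if $H^1(\mathcal A,\mathcal A^* )=\{0\}$. *)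

theory Defs
  imports "HOL-Analysis.Analysis"
begin

text \<open>Banach algebra: a type of class real_normed_algebra and banach (real scalars).
  The dual I^* of a closed subspace I is represented by functions on the algebra that
  vanish outside I and are bounded linear functionals on I.\<close>

definition dual_space :: "('a::real_normed_vector) set \<Rightarrow> ('a \<Rightarrow> real) set" where
  "dual_space I = {f. (\<forall>x. x \<notin> I \<longrightarrow> f x = 0)
      \<and> (\<forall>x\<in>I. \<forall>y\<in>I. f (x + y) = f x + f y)
      \<and> (\<forall>r. \<forall>x\<in>I. f (r *\<^sub>R x) = r * f x)
      \<and> (\<exists>K. \<forall>x\<in>I. \<bar>f x\<bar> \<le> K * norm x)}"

definition lmod :: "'a::real_normed_algebra set \<Rightarrow> 'a \<Rightarrow> ('a \<Rightarrow> real) \<Rightarrow> ('a \<Rightarrow> real)" where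
  "lmod I a f = (\<lambda>x. if x \<in> I then f (x * a) else 0)"

definition rmod :: "'a::real_normed_algebra set \<Rightarrow> ('a \<Rightarrow> real) \<Rightarrow> 'a \<Rightarrow> ('a \<Rightarrow> real)" where
  "rmod I f a = (\<lambda>x. if x \<in> I then f (a * x) else 0)"

definition derivation_into_dual :: "'a::real_normed_algebra set \<Rightarrow> ('a \<Rightarrow> ('a \<Rightarrow> real)) \<Rightarrow> bool" where
  "derivation_into_dual I D \<longleftrightarrow>
     (\<forall>a. D a \<in> dual_space I)
     \<and> (\<forall>a b. D (a + b) = (\<lambda>x. D a x + D b x))
     \<and> (\<forall>r a. D (r *\<^sub>R a) = (\<lambda>x. r * D a x))
     \<and> (\<exists>C. \<forall>a. \<forall>x\<in>I. \<bar>D a x\<bar> \<le> C * norm a * norm x)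
     \<and> (\<forall>a b. D (a * b) = (\<lambda>x. lmod I a (D b) x + rmod I (D a) b x))"

definition inner_derivation_dual :: "'a::real_normed_algebra set \<Rightarrow> ('a \<Rightarrow> ('a \<Rightarrow> real)) \<Rightarrow> bool" where
  "inner_derivation_dual I D \<longleftrightarrow>
     (\<exists>z \<in> dual_space I. \<forall>a. D a = (\<lambda>x. lmod I a z x - rmod I z a x))"

definition H1_dual_trivial :: "'a::real_normed_algebra set \<Rightarrow> bool" where
  "H1_dual_trivial I \<longleftrightarrow> (\<forall>D. derivation_into_dual I D \<longrightarrow> inner_derivation_dual I D)"

definition weakly_amenable :: "'a::real_normed_algebra itself \<Rightarrow> bool" where
  "weakly_amenable _ \<longleftrightarrow> H1_dual_trivial (UNIV :: 'a set)"

definition closed_ideal :: "'a::real_normed_algebra set \<Rightarrow> bool" where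
  "closed_ideal I \<longleftrightarrow> closed I \<and> subspace I
     \<and> (\<forall>a. \<forall>x\<in>I. a * x \<in> I \<and> x * a \<in> I)"

text \<open>A bounded approximate identity of I, given as a net e along a proper filter F
  (the tail filter of a directed index set).\<close>

definition bounded_approx_identity :: "'a::real_normed_algebra set \<Rightarrow> 'i filter \<Rightarrow> ('i \<Rightarrow> 'a) \<Rightarrow> bool" where
  "bounded_approx_identity I F e \<longleftrightarrow> F \<noteq> bot
     \<and> (\<forall>i. e i \<in> I) \<and> (\<exists>K. \<forall>i. norm (e i) \<le> K)
     \<and> (\<forall>x\<in>I. ((\<lambda>i. e i * x) \<longlongrightarrow> x) F \<and> ((\<lambda>i. x * e i) \<longlongrightarrow> x) F)"

definition quasi_central :: "'i filter \<Rightarrow> ('i \<Rightarrow> 'a::real_normed_algebra) \<Rightarrow> bool" where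
  "quasi_central F e \<longleftrightarrow> (\<forall>a. ((\<lambda>i. a * e i - e i * a) \<longlongrightarrow> 0) F)"

end

theory Submission
  imports Defs
begin

text \<open>Given a derivation \<open>D : A \<rightarrow> I\<^sup>*\<close>, the maps \<open>(a, x) \<mapsto> D a (e\<^sub>i x e\<^sub>i)\<close> are defined
  for all \<open>x \<in> A\<close> and are bounded by \<open>M \<parallel>a\<parallel> \<parallel>x\<parallel>\<close> uniformly in \<open>i\<close>, so by Tychonoff they have a
  pointwise cluster point \<open>D'\<close>, which is a weak* cluster point of the functionals for every
  \<open>a\<close> at once. Quasi-centrality of \<open>(e\<^sub>i)\<close> makes the Leibniz defect of the sandwiched maps tend
  to zero, so \<open>D'\<close> is a derivation \<open>A \<rightarrow> A\<^sup>*\<close>, and since \<open>(e\<^sub>i)\<close> is an approximate identity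
  of \<open>I\<close>, \<open>D'\<close> agrees with \<open>D\<close> on \<open>I\<close>. Weak amenability makes \<open>D'\<close> inner, implemented by some
  \<open>z \<in> A\<^sup>*\<close>, and then \<open>D\<close> is implemented by the restriction of \<open>z\<close> to \<open>I\<close>.\<close>

lemma compact_PiE_cball: "compact (PiE UNIV (\<lambda>p::'b. cball (0::real) (B p)))"
proof -
  have "compactin (product_topology (\<lambda>_. euclidean) UNIV)
      (PiE UNIV (\<lambda>p::'b. cball (0::real) (B p)))"
    by (simp add: compactin_PiE)
  then show ?thesis
    by (simp add: euclidean_product_topology)
qed

lemma bounded_net_has_cluster_point:
  fixes \<psi> :: "'i \<Rightarrow> 'b \<Rightarrow> real"
  assumes "F \<noteq> bot" and "\<forall>\<^sub>F i in F. \<forall>p. \<bar>\<psi> i p\<bar> \<le> B p"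
  obtains \<phi> where "\<forall>p. \<bar>\<phi> p\<bar> \<le> B p"
    and "\<And>(h :: ('b \<Rightarrow> real) \<Rightarrow> real) c.
      continuous_on UNIV h \<Longrightarrow> ((\<lambda>i. h (\<psi> i)) \<longlongrightarrow> c) F \<Longrightarrow> h \<phi> = c"
proof -
  let ?U = "PiE UNIV (\<lambda>p. cball 0 (B p))"
  have "filtermap \<psi> F \<noteq> bot"
    using assms(1) by (simp add: filtermap_bot_iff)
  moreover have "eventually (\<lambda>f. f \<in> ?U) (filtermap \<psi> F)"
    unfolding eventually_filtermap using assms(2) by (auto elim!: eventually_mono simp: PiE_iff)
  ultimately obtain \<phi> where \<phi>: "\<phi> \<in> ?U" and cluster: "inf (nhds \<phi>) (filtermap \<psi> F) \<noteq> bot"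
    using compact_PiE_cball[of B, unfolded compact_filter] by blast
  show ?thesis
  proof
    show "\<forall>p. \<bar>\<phi> p\<bar> \<le> B p"
      using \<phi> by (auto simp: PiE_iff)
  next
    fix h :: "('b \<Rightarrow> real) \<Rightarrow> real" and c
    assume "continuous_on UNIV h" and lim: "((\<lambda>i. h (\<psi> i)) \<longlongrightarrow> c) F"
    let ?G = "inf (nhds \<phi>) (filtermap \<psi> F)"
    have "(h \<longlongrightarrow> h \<phi>) (nhds \<phi>)"
      using \<open>continuous_on UNIV h\<close> by (simp add: continuous_on_def tendsto_at_iff_tendsto_nhds)
    then have "(h \<longlongrightarrow> h \<phi>) ?G"
      by (rule tendsto_mono[rotated]) simp
    moreover have "(h \<longlongrightarrow> c) ?G"
      using lim by (metis tendsto_mono inf_le2 filterlim_filtermap)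
    ultimately show "h \<phi> = c"
      using tendsto_unique cluster by blast
  qed
qed

definition two_sided_ideal :: "'a::real_normed_algebra set \<Rightarrow> bool" where
  "two_sided_ideal I \<longleftrightarrow> subspace I \<and> (\<forall>a. \<forall>x\<in>I. a * x \<in> I \<and> x * a \<in> I)"

lemma closed_ideal_imp_two_sided_ideal: "closed_ideal I \<Longrightarrow> two_sided_ideal I"
  by (simp add: closed_ideal_def two_sided_ideal_def)

lemma
  assumes "two_sided_ideal I"
  shows two_sided_ideal_subspace: "subspace I"
    and two_sided_ideal_mult_left: "x \<in> I \<Longrightarrow> a * x \<in> I"
    and two_sided_ideal_mult_right: "x \<in> I \<Longrightarrow> x * a \<in> I"
  using assms unfolding two_sided_ideal_def by auto

lemma two_sided_ideal_sandwich: "two_sided_ideal I \<Longrightarrow> u \<in> I \<Longrightarrow> u * x * u \<in> I"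
  by (intro two_sided_ideal_mult_right)

lemma dual_space_diff:
  assumes "f \<in> dual_space I" and "subspace I" and "y \<in> I" and "z \<in> I"
  shows "f (y - z) = f y - f z"
proof -
  have add: "\<forall>x\<in>I. \<forall>y\<in>I. f (x + y) = f x + f y" and scale: "\<forall>r. \<forall>x\<in>I. f (r *\<^sub>R x) = r * f x"
    using assms(1) unfolding dual_space_def by blast+
  have "(-1) *\<^sub>R z \<in> I"
    using assms(2,4) by (rule subspace_scale)
  then have "f (y + (-1) *\<^sub>R z) = f y + f ((-1) *\<^sub>R z)"
    using add assms(3) by blast
  moreover have "f ((-1) *\<^sub>R z) = (-1) * f z"
    using scale assms(4) by blast
  ultimately show ?thesis
    by simp
qed

lemma dual_space_tendsto_zero:
  assumes "f \<in> dual_space I" and "\<And>i. y i \<in> I" and "(y \<longlongrightarrow> 0) F"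
  shows "((\<lambda>i. f (y i)) \<longlongrightarrow> 0) F"
proof -
  obtain K where K: "\<And>x. x \<in> I \<Longrightarrow> \<bar>f x\<bar> \<le> K * norm x"
    using assms(1) unfolding dual_space_def by blast
  show ?thesis
  proof (rule Lim_null_comparison)
    show "\<forall>\<^sub>F i in F. norm (f (y i)) \<le> K * norm (y i)"
      using K assms(2) by simp
    show "((\<lambda>i. K * norm (y i)) \<longlongrightarrow> 0) F"
      using tendsto_mult_right_zero[OF tendsto_norm_zero[OF assms(3)]] .
  qed
qed

lemma dual_space_tendsto:
  assumes "f \<in> dual_space I" and "subspace I" and "\<And>i. y i \<in> I" and "x \<in> I" and "(y \<longlongrightarrow> x) F"
  shows "((\<lambda>i. f (y i)) \<longlongrightarrow> f x) F"
proof -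
  have "((\<lambda>i. f (y i - x)) \<longlongrightarrow> 0) F"
  proof (rule dual_space_tendsto_zero[OF assms(1)])
    show "y i - x \<in> I" for i
      using assms(2-4) by (rule subspace_diff)
    show "((\<lambda>i. y i - x) \<longlongrightarrow> 0) F"
      using assms(5) by (rule LIM_zero)
  qed
  moreover have "f (y i - x) = f (y i) - f x" for i
    using assms(1-4) by (rule dual_space_diff)
  ultimately show ?thesis
    by (simp add: LIM_zero_iff)
qed

lemma dual_space_restrict:
  assumes "z \<in> dual_space UNIV" and "subspace I"
  shows "(\<lambda>x. if x \<in> I then z x else 0) \<in> dual_space I"
  using assms unfolding dual_space_def by (auto simp: subspace_add subspace_scale)

lemma norm_sandwich_le:
  fixes u x :: "'a::real_normed_algebra"
  assumes "norm u \<le> K"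
  shows "norm (u * x * u) \<le> K\<^sup>2 * norm x"
proof -
  have "norm (u * x * u) \<le> norm u * norm x * norm u"
    by (metis norm_mult_ineq mult_right_mono norm_ge_zero order_trans)
  also have "\<dots> \<le> K * norm x * K"
    using assms order_trans[OF norm_ge_zero assms] by (intro mult_mono mult_right_mono) auto
  finally show ?thesis
    by (simp add: power2_eq_square algebra_simps)
qed

lemma tendsto_zero_Bfun_mult:
  fixes f g :: "'i \<Rightarrow> 'a::real_normed_algebra"
  assumes "Bfun f F" and "(g \<longlongrightarrow> 0) F"
  shows "((\<lambda>i. f i * g i) \<longlongrightarrow> 0) F"
  using bounded_bilinear.Bfun_prod_Zfun[OF bounded_bilinear_mult assms(1)] assms(2)
  by (simp add: tendsto_Zfun_iff)

lemma tendsto_zero_mult_Bfun: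
  fixes f g :: "'i \<Rightarrow> 'a::real_normed_algebra"
  assumes "(g \<longlongrightarrow> 0) F" and "Bfun f F"
  shows "((\<lambda>i. g i * f i) \<longlongrightarrow> 0) F"
  using bounded_bilinear.Zfun_prod_Bfun[OF bounded_bilinear_mult _ assms(2)] assms(1)
  by (simp add: tendsto_Zfun_iff)

lemma sandwich_tendsto:
  fixes e :: "'i \<Rightarrow> 'a::real_normed_algebra"
  assumes "Bfun e F" and "((\<lambda>i. e i * x) \<longlongrightarrow> x) F" and "((\<lambda>i. x * e i) \<longlongrightarrow> x) F"
  shows "((\<lambda>i. e i * x * e i) \<longlongrightarrow> x) F"
proof -
  have "((\<lambda>i. e i * (x * e i - x) + (e i * x - x)) \<longlongrightarrow> 0) F"
    using assms by (intro tendsto_add_zero tendsto_zero_Bfun_mult LIM_zero)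
  moreover have "e i * (x * e i - x) + (e i * x - x) = e i * x * e i - x" for i
    by (simp add: algebra_simps)
  ultimately show ?thesis
    by (simp add: LIM_zero_iff)
qed

lemma sandwich_mult_right_tendsto_zero:
  fixes e :: "'i \<Rightarrow> 'a::real_normed_algebra"
  assumes "Bfun e F" and "quasi_central F e"
  shows "((\<lambda>i. e i * x * e i * a - e i * (x * a) * e i) \<longlongrightarrow> 0) F"
proof -
  have "((\<lambda>i. a * e i - e i * a) \<longlongrightarrow> 0) F"
    using assms(2) unfolding quasi_central_def ..
  then have "((\<lambda>i. e i * a - a * e i) \<longlongrightarrow> 0) F"
    using tendsto_minus by fastforce
  then have "((\<lambda>i. e i * (x * (e i * a - a * e i))) \<longlongrightarrow> 0) F"
    by (rule tendsto_zero_Bfun_mult[OF assms(1) tendsto_mult_right_zero])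
  moreover have "e i * (x * (e i * a - a * e i)) = e i * x * e i * a - e i * (x * a) * e i" for i
    by (simp add: algebra_simps)
  ultimately show ?thesis
    by simp
qed

lemma sandwich_mult_left_tendsto_zero:
  fixes e :: "'i \<Rightarrow> 'a::real_normed_algebra"
  assumes "Bfun e F" and "quasi_central F e"
  shows "((\<lambda>i. b * (e i * x * e i) - e i * (b * x) * e i) \<longlongrightarrow> 0) F"
proof -
  have "((\<lambda>i. b * e i - e i * b) \<longlongrightarrow> 0) F"
    using assms(2) unfolding quasi_central_def ..
  then have "((\<lambda>i. (b * e i - e i * b) * x * e i) \<longlongrightarrow> 0) F"
    using assms(1) by (intro tendsto_zero_mult_Bfun tendsto_mult_left_zero)
  moreover have "(b * e i - e i * b) * x * e i = b * (e i * x * e i) - e i * (b * x) * e i" for i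
    by (simp add: algebra_simps)
  ultimately show ?thesis
    by simp
qed

lemma bounded_approx_identity_Bfun: "bounded_approx_identity I F e \<Longrightarrow> Bfun e F"
  unfolding bounded_approx_identity_def by (blast intro: BfunI always_eventually)

lemma derivation_into_dual_bound:
  fixes D :: "'a::real_normed_algebra \<Rightarrow> 'a \<Rightarrow> real"
  assumes "derivation_into_dual I D"
  obtains C where "C \<ge> 0" and "\<And>a x. x \<in> I \<Longrightarrow> \<bar>D a x\<bar> \<le> C * norm a * norm x"
proof -
  obtain C where C: "\<And>a x. x \<in> I \<Longrightarrow> \<bar>D a x\<bar> \<le> C * norm a * norm x"
    using assms unfolding derivation_into_dual_def by blast
  show ?thesis
  proof
    fix a x :: 'a
    assume "x \<in> I"
    have "C * norm a * norm x \<le> max C 0 * norm a * norm x"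
      by (intro mult_right_mono) auto
    then show "\<bar>D a x\<bar> \<le> max C 0 * norm a * norm x"
      by (rule order_trans[OF C[OF \<open>x \<in> I\<close>]])
  qed simp
qed

lemma derivation_into_dual_dual_space: "derivation_into_dual I D \<Longrightarrow> D a \<in> dual_space I"
  by (simp add: derivation_into_dual_def)

lemma derivation_into_dual_mult_apply:
  assumes "derivation_into_dual I D" and "y \<in> I"
  shows "D (a * b) y = D b (y * a) + D a (b * y)"
  using assms by (simp add: derivation_into_dual_def lmod_def rmod_def)

lemma derivation_into_dual_UNIVI:
  assumes "\<And>a b x. D (a + b) x = D a x + D b x"
    and "\<And>r a x. D (r *\<^sub>R a) x = r * D a x"
    and "\<And>a x y. D a (x + y) = D a x + D a y"
    and "\<And>a r x. D a (r *\<^sub>R x) = r * D a x"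
    and "\<And>a x. \<bar>D a x\<bar> \<le> C * norm a * norm x"
    and "\<And>a b x. D (a * b) x = D b (x * a) + D a (b * x)"
  shows "derivation_into_dual UNIV D"
proof -
  have "D a \<in> dual_space UNIV" for a
  proof -
    have "\<forall>x. \<bar>D a x\<bar> \<le> (C * norm a) * norm x"
      using assms(5) by simp
    then show ?thesis
      using assms(3,4) unfolding dual_space_def by blast
  qed
  then show ?thesis
    unfolding derivation_into_dual_def lmod_def rmod_def
    using assms(1,2,5,6) by (auto simp: fun_eq_iff)
qed

lemma derivation_sandwich_bound:
  fixes D :: "'a::real_normed_algebra \<Rightarrow> 'a \<Rightarrow> real"
  assumes "two_sided_ideal I" and "bounded_approx_identity I F e" and "derivation_into_dual I D"
  obtains M where "\<And>i a x. \<bar>D a (e i * x * e i)\<bar> \<le> M * norm a * norm x"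
proof -
  obtain K where eI: "\<And>i. e i \<in> I" and K: "\<And>i. norm (e i) \<le> K"
    using assms(2) unfolding bounded_approx_identity_def by blast
  obtain C where "C \<ge> 0" and C: "\<And>a x. x \<in> I \<Longrightarrow> \<bar>D a x\<bar> \<le> C * norm a * norm x"
    using derivation_into_dual_bound[OF assms(3)] by blast
  show ?thesis
  proof
    fix i a x
    have "\<bar>D a (e i * x * e i)\<bar> \<le> C * norm a * norm (e i * x * e i)"
      using C two_sided_ideal_sandwich[OF assms(1) eI] by blast
    also have "\<dots> \<le> C * norm a * (K\<^sup>2 * norm x)"
      using \<open>C \<ge> 0\<close> norm_sandwich_le[OF K] by (intro mult_left_mono) auto
    finally show "\<bar>D a (e i * x * e i)\<bar> \<le> C * K\<^sup>2 * norm a * norm x"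
      by (simp add: algebra_simps)
  qed
qed

lemma derivation_sandwich_tendsto:
  assumes "two_sided_ideal I" and "bounded_approx_identity I F e"
    and "derivation_into_dual I D" and "x \<in> I"
  shows "((\<lambda>i. D a (e i * x * e i)) \<longlongrightarrow> D a x) F"
proof (rule dual_space_tendsto[where f = "D a" and y = "\<lambda>i. e i * x * e i"])
  show "e i * x * e i \<in> I" for i
    using assms(1,2) by (simp add: two_sided_ideal_sandwich bounded_approx_identity_def)
  have "((\<lambda>i. e i * x) \<longlongrightarrow> x) F" and "((\<lambda>i. x * e i) \<longlongrightarrow> x) F"
    using assms(2,4) unfolding bounded_approx_identity_def by auto
  with bounded_approx_identity_Bfun[OF assms(2)] show "((\<lambda>i. e i * x * e i) \<longlongrightarrow> x) F"
    by (rule sandwich_tendsto)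
qed (use assms in \<open>auto simp: derivation_into_dual_dual_space two_sided_ideal_subspace\<close>)

lemma derivation_sandwich_leibniz_defect_tendsto_zero:
  assumes "two_sided_ideal I" and "bounded_approx_identity I F e" and "quasi_central F e"
    and "derivation_into_dual I D"
  shows "((\<lambda>i. D (a * b) (e i * x * e i) - D b (e i * (x * a) * e i) - D a (e i * (b * x) * e i))
    \<longlongrightarrow> 0) F"
proof -
  have sandwich_in: "e i * y * e i \<in> I" for i y
    using assms(1,2) by (simp add: two_sided_ideal_sandwich bounded_approx_identity_def)
  have in_I: "e i * x * e i * a \<in> I" "b * (e i * x * e i) \<in> I" for i
    using assms(1) sandwich_in by (auto intro: two_sided_ideal_mult_left two_sided_ideal_mult_right)
  have dual: "D c \<in> dual_space I" for c
    using assms(4) by (rule derivation_into_dual_dual_space)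
  have "D (a * b) (e i * x * e i) - D b (e i * (x * a) * e i) - D a (e i * (b * x) * e i)
      = D b (e i * x * e i * a - e i * (x * a) * e i) + D a (b * (e i * x * e i) - e i * (b * x) * e i)"
    for i
    using assms(1) sandwich_in in_I
    by (simp add: derivation_into_dual_mult_apply[OF assms(4)] dual_space_diff[OF dual]
        two_sided_ideal_subspace)
  moreover have "((\<lambda>i. D b (e i * x * e i * a - e i * (x * a) * e i)
      + D a (b * (e i * x * e i) - e i * (b * x) * e i)) \<longlongrightarrow> 0) F"
    using assms(1-3) sandwich_in in_I
    by (intro tendsto_add_zero dual_space_tendsto_zero[OF dual] subspace_diff
        sandwich_mult_right_tendsto_zero sandwich_mult_left_tendsto_zero bounded_approx_identity_Bfun)
      (auto simp: two_sided_ideal_subspace)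
  ultimately show ?thesis
    by simp
qed

lemma derivation_extends_to_dual_of_algebra:
  fixes D :: "'a::real_normed_algebra \<Rightarrow> 'a \<Rightarrow> real"
  assumes "two_sided_ideal I" and "bounded_approx_identity I F e" and "quasi_central F e"
    and D: "derivation_into_dual I D"
  obtains D' where "derivation_into_dual UNIV D'" and "\<And>a x. x \<in> I \<Longrightarrow> D' a x = D a x"
proof -
  have "F \<noteq> bot" and eI: "\<And>i. e i \<in> I"
    using assms(2) unfolding bounded_approx_identity_def by blast+
  obtain M where M: "\<And>i a x. \<bar>D a (e i * x * e i)\<bar> \<le> M * norm a * norm x"
    using derivation_sandwich_bound[OF assms(1,2) D] by blast
  define \<psi> where "\<psi> i = (\<lambda>(a, x). D a (e i * x * e i))" for i
  have "\<forall>\<^sub>F i in F. \<forall>p. \<bar>\<psi> i p\<bar> \<le> M * norm (fst p) * norm (snd p)"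
    using M by (simp add: \<psi>_def split: prod.split)
  then obtain \<phi> where bound: "\<forall>p. \<bar>\<phi> p\<bar> \<le> M * norm (fst p) * norm (snd p)"
    and transfer: "\<And>(h :: ('a \<times> 'a \<Rightarrow> real) \<Rightarrow> real) c.
      continuous_on UNIV h \<Longrightarrow> ((\<lambda>i. h (\<psi> i)) \<longlongrightarrow> c) F \<Longrightarrow> h \<phi> = c"
    by (rule bounded_net_has_cluster_point[OF \<open>F \<noteq> bot\<close>]) iprover
  have exact: "h \<phi> = 0" if "continuous_on UNIV h" and "\<And>i. h (\<psi> i) = 0"
    for h :: "('a \<times> 'a \<Rightarrow> real) \<Rightarrow> real"
    using transfer[OF that(1)] that(2) by simp
  have dual_add: "D a (x + y) = D a x + D a y" if "x \<in> I" and "y \<in> I" for a x y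
    using derivation_into_dual_dual_space[OF D] that unfolding dual_space_def by auto
  have dual_scale: "D a (r *\<^sub>R x) = r * D a x" if "x \<in> I" for a x r
    using derivation_into_dual_dual_space[OF D] that unfolding dual_space_def by auto
  note continuous = continuous_on_diff continuous_on_mult_left
  show ?thesis
  proof
    show "derivation_into_dual UNIV (\<lambda>a x. \<phi> (a, x))"
    proof (rule derivation_into_dual_UNIVI)
      fix a b x y :: 'a and r :: real
      show "\<phi> (a + b, x) = \<phi> (a, x) + \<phi> (b, x)"
        using exact[of "\<lambda>f. f (a + b, x) - f (a, x) - f (b, x)"] D
        by (simp add: continuous \<psi>_def derivation_into_dual_def)
      show "\<phi> (r *\<^sub>R a, x) = r * \<phi> (a, x)"
        using exact[of "\<lambda>f. f (r *\<^sub>R a, x) - r * f (a, x)"] D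
        by (simp add: continuous \<psi>_def derivation_into_dual_def)
      show "\<phi> (a, x + y) = \<phi> (a, x) + \<phi> (a, y)"
        using exact[of "\<lambda>f. f (a, x + y) - f (a, x) - f (a, y)"]
          two_sided_ideal_sandwich[OF assms(1) eI]
        by (simp add: continuous \<psi>_def dual_add distrib_left distrib_right)
      show "\<phi> (a, r *\<^sub>R x) = r * \<phi> (a, x)"
        using exact[of "\<lambda>f. f (a, r *\<^sub>R x) - r * f (a, x)"]
          two_sided_ideal_sandwich[OF assms(1) eI]
        by (simp add: continuous \<psi>_def dual_scale)
      show "\<bar>\<phi> (a, x)\<bar> \<le> M * norm a * norm x"
        using bound by auto
      show "\<phi> (a * b, x) = \<phi> (b, x * a) + \<phi> (a, b * x)"
        using transfer[of "\<lambda>f. f (a * b, x) - f (b, x * a) - f (a, b * x)" 0]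
          derivation_sandwich_leibniz_defect_tendsto_zero[OF assms]
        by (simp add: continuous \<psi>_def)
    qed
  next
    show "\<phi> (a, x) = D a x" if "x \<in> I" for a x
      using transfer[of "\<lambda>f. f (a, x)"] derivation_sandwich_tendsto[OF assms(1,2) D that]
      by (simp add: \<psi>_def)
  qed
qed

lemma inner_derivation_dual_restrict:
  assumes "inner_derivation_dual UNIV D'" and "two_sided_ideal I"
    and agree: "\<And>a x. x \<in> I \<Longrightarrow> D' a x = D a x" and dual: "\<And>a. D a \<in> dual_space I"
  shows "inner_derivation_dual I D"
proof -
  obtain z where "z \<in> dual_space UNIV" and z: "\<And>a. D' a = (\<lambda>x. lmod UNIV a z x - rmod UNIV z a x)"
    using assms(1) unfolding inner_derivation_dual_def by blast
  define z' where "z' x = (if x \<in> I then z x else 0)" for x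
  have "z' \<in> dual_space I"
    unfolding z'_def using \<open>z \<in> dual_space UNIV\<close> two_sided_ideal_subspace[OF assms(2)]
    by (rule dual_space_restrict)
  moreover have "D a x = lmod I a z' x - rmod I z' a x" for a x
  proof (cases "x \<in> I")
    case True
    then have "D a x = z (x * a) - z (a * x)"
      using agree[symmetric] by (simp add: z lmod_def rmod_def)
    with True show ?thesis
      using assms(2)
      by (simp add: lmod_def rmod_def z'_def two_sided_ideal_mult_left two_sided_ideal_mult_right)
  next
    case False
    then show ?thesis
      using dual[of a] by (simp add: dual_space_def lmod_def rmod_def)
  qed
  ultimately show ?thesis
    unfolding inner_derivation_dual_def by blast
qed

theorem theorem3p3:
  fixes I :: "'a::{real_normed_algebra, banach} set"
    and F :: "'i filter" and e :: "'i \<Rightarrow> 'a"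
  assumes "weakly_amenable TYPE('a)"
    and "closed_ideal I"
    and "bounded_approx_identity I F e"
    and "quasi_central F e"
  shows "H1_dual_trivial I"
  unfolding H1_dual_trivial_def
proof (intro allI impI)
  fix D
  assume D: "derivation_into_dual I D"
  have ideal: "two_sided_ideal I"
    using assms(2) by (rule closed_ideal_imp_two_sided_ideal)
  obtain D' where "derivation_into_dual UNIV D'" and agree: "\<And>a x. x \<in> I \<Longrightarrow> D' a x = D a x"
    using derivation_extends_to_dual_of_algebra[OF ideal assms(3,4) D] by blast
  then have "inner_derivation_dual UNIV D'"
    using assms(1) unfolding weakly_amenable_def H1_dual_trivial_def by blast
  then show "inner_derivation_dual I D"
    using ideal agree derivation_into_dual_dual_space[OF D] by (rule inner_derivation_dual_restrict)
qed

end
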